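(* Let $(\mathbb{X},d,\mu)$ be a proper metric measure space satisfying the $\delta$-annular decay property for some $\delta\in(0,1]$ with constant $D_\delta\geq1$. Let $\varrho$ be a continuous admissible radius function in a bounded domain $\Omega\subset\mathbb{X}$. Then there is a constant $C=C(D_\delta,\mu)>0$ such that for every $u\in L^\infty(\Omega)$, every compact $K\subset\Omega$, all $x,y\in K$ and every $n\in\mathbb{N}$, $$|\mathcal{M}^nu(x)-\mathcal{M}^nu(y)|\leq\|u\|_\infty\,\mathcal{W}_{\mu,K}(d(x,y)),\qquad \mathcal{W}_{\mu,K}(t)=C\,\varrho_K^{-\delta}\left(\widehat\omega_\varrho(t)\right)^\delta,\ t\in[0,\mathrm{diam}\,\Omega].$$ In particular, the sequence $\{\mathcal{M}^nu\}_n$ is locally uniformly equicontinuous in $\Omega$.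
   Context: A metric space is proper if closed bounded sets are compact. A metric measure space $(\mathbb{X},d,\mu)$ is a metric space with a positive Borel regular measure $\mu$ with $0<\mu(B)<\infty$ for every ball $B$. It satisfies the $\delta$-annular decay property if there is $D_\delta\geq1$ with $\mu(B(x,R)\setminus B(x,r))\leq D_\delta\left(\frac{R-r}{R}\right)^\delta\mu(B(x,R))$ for all $x$, $0<r\leq R$. An admissible radius function in $\Omega$ is $\varrho\in C(\overline\Omega)$, $\varrho\ge0$, with $0<\varrho(x)\leq\mathrm{dist}(x,\partial\Omega)$ for $x\in\Omega$ and $\varrho=0$ exactly on $\partial\Omega$. $\varrho_K=\inf_K\varrho$. $B_x=\overline{B}(x,\varrho(x))$, $\mathcal{M}u(x)=\frac{1}{\mu(B_x)}\int_{B_x}u\,d\mu$, $\mathcal{M}^n$ its $n$-th iterate. A modulus of continuity is a nondecreasing continuous $\omega:[0,\mathrm{diam}\,\Omega]\to[0,\infty)$ with $\omega(0)=0$. Fix a concave modulus of continuity $\omega_{\varrho,\Omega}$ for $\varrho$ on $\Omega$ (i.e. $|\varrho(x)-\varrho(y)|\le\omega_{\varrho,\Omega}(d(x,y))$) with $\omega_{\varrho,\Omega}(\mathrm{diam}\,\Omega)\le\mathrm{diam}\,\Omega$. Define $\widehat\omega_\varrho(t)=t$ if $\omega_{\varrho,\Omega}(t)\le t$ for all $t\in[0,\mathrm{diam}\,\Omega]$, and otherwise $\widehat\omega_\varrho(t)=\frac{\mathrm{diam}\,\Omega}{\omega_{\varrho,\Omega}(\mathrm{diam}\,\Omega)}\,\omega_{\varrho,\Omega}(t)$.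 A sequence is locally uniformly equicontinuous in $\Omega$ if it is uniformly equicontinuous on each compact $K\subset\Omega$. *)

theory Defs
  imports "HOL-Analysis.Analysis" "HOL-Probability.Essential_Supremum"
begin

definition proper_space :: "'a::metric_space itself \<Rightarrow> bool" where
  "proper_space _ \<longleftrightarrow> (\<forall>S::'a set. closed S \<and> bounded S \<longrightarrow> compact S)"

definition mm_space :: "'a::metric_space measure \<Rightarrow> bool" where
  "mm_space M \<longleftrightarrow> sets M = sets borel \<and>
     (\<forall>x r. 0 < r \<longrightarrow> 0 < emeasure M (ball x r) \<and> emeasure M (ball x r) < \<infinity>)"

definition annular_decay :: "'a::metric_space measure \<Rightarrow> real \<Rightarrow> real \<Rightarrow> bool" where
  "annular_decay M \<delta> D \<longleftrightarrow> D \<ge> 1 \<and>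
     (\<forall>x r R. 0 < r \<and> r \<le> R \<longrightarrow>
        measure M (ball x R - ball x r) \<le> D * ((R - r) / R) powr \<delta> * measure M (ball x R))"

definition bounded_domain :: "'a::metric_space set \<Rightarrow> bool" where
  "bounded_domain \<Omega> \<longleftrightarrow> open \<Omega> \<and> connected \<Omega> \<and> \<Omega> \<noteq> {} \<and> bounded \<Omega>"

text \<open>Admissible radius function; dist(x, boundary) written out as a bound by all boundary distances.\<close>
definition admissible_radius :: "'a::metric_space set \<Rightarrow> ('a \<Rightarrow> real) \<Rightarrow> bool" where
  "admissible_radius \<Omega> \<rho> \<longleftrightarrow> continuous_on (closure \<Omega>) \<rho> \<and>
     (\<forall>x\<in>closure \<Omega>. 0 \<le> \<rho> x) \<and>
     (\<forall>x\<in>\<Omega>. 0 < \<rho> x \<and> (\<forall>z\<in>frontier \<Omega>. \<rho> x \<le> dist x z)) \<and>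
     (\<forall>x\<in>closure \<Omega>. \<rho> x = 0 \<longleftrightarrow> x \<in> frontier \<Omega>)"

definition modulus_of_continuity :: "real \<Rightarrow> (real \<Rightarrow> real) \<Rightarrow> bool" where
  "modulus_of_continuity L \<omega> \<longleftrightarrow> mono_on {0..L} \<omega> \<and> continuous_on {0..L} \<omega> \<and> \<omega> 0 = 0 \<and>
     (\<forall>t\<in>{0..L}. 0 \<le> \<omega> t)"

text \<open>The normalized modulus \<open>\<omega>\<close>-hat, with L = diam \<Omega>.\<close>
definition omega_hat :: "real \<Rightarrow> (real \<Rightarrow> real) \<Rightarrow> real \<Rightarrow> real" where
  "omega_hat L \<omega> t = (if \<forall>s\<in>{0..L}. \<omega> s \<le> s then t else L / \<omega> L * \<omega> t)"

text \<open>Averaging operator over the closed ball B_x = cball x (\<rho> x); the L^\<infinity>(\<Omega>) function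
  is integrated over B_x \<inter> \<Omega> (i.e. extended by zero outside \<Omega>).\<close>
definition avg_op :: "'a::metric_space measure \<Rightarrow> 'a set \<Rightarrow> ('a \<Rightarrow> real) \<Rightarrow> ('a \<Rightarrow> real) \<Rightarrow> 'a \<Rightarrow> real" where
  "avg_op M \<Omega> \<rho> u x = (LINT z:(cball x (\<rho> x) \<inter> \<Omega>)|M. u z) / measure M (cball x (\<rho> x))"

definition Linf_norm :: "'a::metric_space measure \<Rightarrow> 'a set \<Rightarrow> ('a \<Rightarrow> real) \<Rightarrow> ereal" where
  "Linf_norm M \<Omega> u = esssup (restrict_space M \<Omega>) (\<lambda>z. ereal \<bar>u z\<bar>)"

end

theory Submission
  imports Defs
begin

text \<open>
  For balls \<open>B\<^sub>1 = cball x r\<^sub>1\<close>, \<open>B\<^sub>2 = cball y r\<^sub>2\<close> with radii at least \<open>k\<close>, the symmetric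
  difference lies in an annulus around \<open>x\<close> of relative width \<open>O(s/k)\<close>, \<open>s = d(x,y) + \<bar>r\<^sub>1 - r\<^sub>2\<bar>\<close>,
  so annular decay (with the doubling it implies) bounds its measure by \<open>O((s/k)\<^sup>\<delta>) \<mu>(B\<^sub>1)\<close>.
  Hence the averages over \<open>B\<^sub>1\<close> and \<open>B\<^sub>2\<close> of a function bounded by \<open>A\<close> differ by
  \<open>O(A (s/k)\<^sup>\<delta>)\<close>. Averaging preserves the bound \<open>A = \<parallel>u\<parallel>\<^sub>\<infinity>\<close>, so the estimate holds for every
  iterate with the same constant; on a compact \<open>K\<close> take \<open>k = \<rho>\<^sub>K\<close> and use
  \<open>s \<le> d(x,y) + \<omega>(d(x,y)) \<le> 2 \<omega>\<^sub>\<rho>(d(x,y))\<close>, where \<open>\<omega>\<^sub>\<rho>\<close> is the normalised modulus,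
  which dominates both \<open>t\<close> and \<open>\<omega>(t)\<close> because \<open>\<omega>\<close> is concave with \<open>\<omega>(0) = 0\<close>.
\<close>

lemma abs_diff_divide_le:
  fixes a b Ix Iy A \<Delta> :: real
  assumes "0 < a" "0 < b" "0 \<le> A"
    and "\<bar>Ix - Iy\<bar> \<le> A * \<Delta>" "\<bar>Iy\<bar> \<le> A * b" "\<bar>b - a\<bar> \<le> \<Delta>"
  shows "\<bar>Ix / a - Iy / b\<bar> \<le> 2 * A * \<Delta> / a"
proof -
  have split: "Ix / a - Iy / b = (Ix - Iy) / a + (Iy / b) * (b - a) / a"
    using assms by (simp add: field_simps)
  have "\<bar>Iy / b\<bar> \<le> A" using assms by (simp add: abs_divide divide_le_eq)
  then have "\<bar>(Iy / b) * (b - a)\<bar> \<le> A * \<Delta>"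
    unfolding abs_mult using assms by (intro mult_mono) auto
  then have "\<bar>(Iy / b) * (b - a)\<bar> / a \<le> A * \<Delta> / a"
    using assms by (intro divide_right_mono) auto
  then have "\<bar>(Iy / b) * (b - a) / a\<bar> \<le> A * \<Delta> / a"
    using assms by (subst abs_divide) simp
  moreover have "\<bar>(Ix - Iy) / a\<bar> \<le> A * \<Delta> / a"
    using assms by (simp add: abs_divide divide_right_mono)
  ultimately show ?thesis unfolding split by linarith
qed

lemma powr_div_le_of_le_double:
  fixes k s w \<delta> :: real
  assumes "0 < k" "0 \<le> s" "s \<le> 2 * w" "0 < \<delta>" "\<delta> \<le> 1"
  shows "(s / k) powr \<delta> \<le> 2 * (k powr (-\<delta>) * w powr \<delta>)"
proof -
  have "(s / k) powr \<delta> \<le> (2 * w / k) powr \<delta>"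
    using assms by (intro powr_mono2 divide_right_mono) auto
  also have "\<dots> = 2 powr \<delta> * (k powr (-\<delta>) * w powr \<delta>)"
    using assms by (simp add: powr_divide powr_mult powr_minus_divide)
  also have "\<dots> \<le> 2 powr 1 * (k powr (-\<delta>) * w powr \<delta>)"
    using assms by (intro mult_right_mono powr_mono) auto
  finally show ?thesis by simp
qed

lemma mult_powr_div_less:
  fixes k s \<epsilon> c \<delta> :: real
  assumes "0 < k" "0 < \<epsilon>" "0 \<le> c" "0 \<le> s" "0 < \<delta>"
    and "s < k * (\<epsilon> / (c + 1)) powr (1 / \<delta>)"
  shows "c * (s / k) powr \<delta> < \<epsilon>"
proof -
  have "s / k < (\<epsilon> / (c + 1)) powr (1 / \<delta>)"
    using assms by (simp add: divide_less_eq mult.commute)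
  then have "(s / k) powr \<delta> < ((\<epsilon> / (c + 1)) powr (1 / \<delta>)) powr \<delta>"
    using assms by (intro powr_less_mono2) auto
  also have "\<dots> = \<epsilon> / (c + 1)"
    using assms by (simp add: powr_powr)
  finally have "(c + 1) * (s / k) powr \<delta> < \<epsilon>"
    using assms by (simp add: field_simps)
  moreover have "c * (s / k) powr \<delta> \<le> (c + 1) * (s / k) powr \<delta>"
    by (intro mult_right_mono) auto
  ultimately show ?thesis by linarith
qed

lemma omega_hat_ge:
  assumes m: "modulus_of_continuity L \<omega>" and c: "concave_on {0..L} \<omega>" and "\<omega> L \<le> L"
    and t: "0 \<le> t" "t \<le> L"
  shows "t \<le> omega_hat L \<omega> t" "\<omega> t \<le> omega_hat L \<omega> t"
proof -
  have "t \<le> omega_hat L \<omega> t \<and> \<omega> t \<le> omega_hat L \<omega> t"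
  proof (cases "\<forall>s\<in>{0..L}. \<omega> s \<le> s")
    case True
    then show ?thesis using t by (simp add: omega_hat_def)
  next
    case False
    then obtain s0 where s0: "0 \<le> s0" "s0 \<le> L" "s0 < \<omega> s0" by auto
    have "\<omega> s0 \<le> \<omega> L"
      using m s0 by (auto simp: modulus_of_continuity_def intro: mono_onD)
    then have \<omega>L: "0 < \<omega> L" "0 < L" "1 \<le> L / \<omega> L"
      using s0 \<open>\<omega> L \<le> L\<close> by auto
    have \<omega>t: "0 \<le> \<omega> t" and \<omega>0: "\<omega> 0 = 0"
      using m t by (auto simp: modulus_of_continuity_def)
    \<comment> \<open>concavity between \<open>0\<close> and \<open>L\<close> puts \<open>\<omega>\<close> above the chord \<open>t \<mapsto> t \<omega>(L) / L\<close>\<close>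
    have "(1 - t/L) * \<omega> 0 + (t/L) * \<omega> L \<le> \<omega> ((1 - t/L) *\<^sub>R 0 + (t/L) *\<^sub>R L)"
      using concave_onD_Icc[OF c, of "t/L"] \<omega>L t by auto
    then have "t \<le> L / \<omega> L * \<omega> t"
      using \<omega>L \<omega>0 by (simp add: field_simps)
    moreover have "\<omega> t \<le> L / \<omega> L * \<omega> t"
      using \<omega>L \<omega>t by (metis mult_right_mono mult_1)
    moreover have "omega_hat L \<omega> t = L / \<omega> L * \<omega> t"
      unfolding omega_hat_def using False by (simp only: if_False)
    ultimately show ?thesis by simp
  qed
  then show "t \<le> omega_hat L \<omega> t" "\<omega> t \<le> omega_hat L \<omega> t" by auto
qed

locale annular_decay_space =
  fixes M :: "'a::metric_space measure" and \<delta> D :: real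
  assumes mm_space: "mm_space M"
    and \<delta>_pos: "0 < \<delta>" and \<delta>_le_1: "\<delta> \<le> 1"
    and annular_decay: "annular_decay M \<delta> D"
begin

lemma sets_M: "sets M = sets borel"
  using mm_space by (simp add: mm_space_def)

lemma space_M: "space M = UNIV"
  using sets_eq_imp_space_eq[OF sets_M] by simp

lemma open_in_sets_M [measurable]: "open S \<Longrightarrow> S \<in> sets M"
  by (simp add: sets_M)

lemma cball_in_sets_M [measurable]: "cball x r \<in> sets M"
  by (simp add: sets_M)

lemma D_ge_1: "1 \<le> D"
  using annular_decay by (simp add: annular_decay_def)

lemma emeasure_bounded_finite:
  assumes "bounded S" shows "emeasure M S < \<infinity>"
proof -
  obtain x r where "S \<subseteq> ball x r" "0 < r"
    using assms by (metis bounded_subset_ballD)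
  then have "emeasure M S \<le> emeasure M (ball x r)"
    by (intro emeasure_mono) (auto simp: sets_M)
  also have "\<dots> < \<infinity>"
    using mm_space \<open>0 < r\<close> by (simp add: mm_space_def)
  finally show ?thesis .
qed

lemma fmeasurable_bounded: "S \<in> sets M \<Longrightarrow> bounded S \<Longrightarrow> S \<in> fmeasurable M"
  using emeasure_bounded_finite by (simp add: fmeasurable_def)

lemma measure_mono_bounded: "S \<subseteq> T \<Longrightarrow> T \<in> sets M \<Longrightarrow> bounded T \<Longrightarrow> S \<in> sets M \<Longrightarrow>
    measure M S \<le> measure M T"
  by (intro measure_mono_fmeasurable fmeasurable_bounded)

lemma measure_cball_pos:
  assumes "0 < r" shows "0 < measure M (cball x r)"
proof -
  have "0 < measure M (ball x r)"
    using mm_space assms unfolding mm_space_def measure_def by (auto simp: enn2real_positive_iff)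
  also have "\<dots> \<le> measure M (cball x r)"
    by (intro measure_mono_bounded) (auto simp: sets_M)
  finally show ?thesis .
qed

lemma measure_annulus_le:
  "0 < r \<Longrightarrow> r \<le> R \<Longrightarrow>
     measure M (ball x R - ball x r) \<le> D * ((R - r) / R) powr \<delta> * measure M (ball x R)"
  using annular_decay by (simp add: annular_decay_def)

text \<open>The relative width \<open>\<theta>\<close> of an annulus carrying at most half the measure of its ball.\<close>

definition \<theta> :: real where "\<theta> = (1 / (2 * D)) powr (1 / \<delta>)"

lemma \<theta>_pos: "0 < \<theta>"
  using D_ge_1 by (simp add: \<theta>_def)

lemma \<theta>_le_half: "\<theta> \<le> 1/2"
proof -
  have "\<theta> \<le> (1/2) powr (1 / \<delta>)"
    unfolding \<theta>_def using D_ge_1 \<delta>_pos by (intro powr_mono2) (auto simp: field_simps)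
  also have "\<dots> \<le> (1/2) powr 1"
    using \<delta>_pos \<delta>_le_1 by (intro powr_mono') (auto simp: field_simps)
  finally show ?thesis by simp
qed

lemma measure_ball_le_twice_shrunk:
  assumes "0 < R" shows "measure M (ball x R) \<le> 2 * measure M (ball x ((1 - \<theta>) * R))"
proof -
  have r: "0 < (1 - \<theta>) * R" "(1 - \<theta>) * R \<le> R"
    using \<theta>_pos \<theta>_le_half assms by auto
  have half: "D * \<theta> powr \<delta> = 1/2"
    using D_ge_1 \<delta>_pos by (simp add: \<theta>_def powr_powr)
  have width: "(R - (1 - \<theta>) * R) / R = \<theta>"
    using assms by (simp add: field_simps)
  have "measure M (ball x R - ball x ((1 - \<theta>) * R)) \<le> 1/2 * measure M (ball x R)"
    using measure_annulus_le[OF r, of x] unfolding width half .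
  moreover have "measure M (ball x R) =
      measure M (ball x R - ball x ((1 - \<theta>) * R)) + measure M (ball x ((1 - \<theta>) * R))"
    using r emeasure_bounded_finite[of "ball x R"] by (subst measure_Diff) (auto simp: sets_M)
  ultimately show ?thesis by linarith
qed

lemma measure_symdiff_cballs_le:
  assumes k: "0 < k" "k \<le> r1" "k \<le> r2"
    and s: "s = dist x y + \<bar>r1 - r2\<bar>" "2 * s \<le> \<theta> * r1"
  shows "measure M ((cball x r1 - cball y r2) \<union> (cball y r2 - cball x r1))
     \<le> 6 * D * (s / k) powr \<delta> * measure M (cball x r1)"
proof -
  \<comment> \<open>the outer radius is \<open>r1 + 2s\<close> rather than \<open>r1 + s\<close> so that shrinking it by the factor
    \<open>1 - \<theta>\<close> of the doubling estimate still lands inside \<open>cball x r1\<close>\<close>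
  define R where "R = r1 + 2 * s"
  define r0 where "r0 = r1 - s"
  have "\<theta> * r1 \<le> 1/2 * r1"
    using \<theta>_le_half k by (intro mult_right_mono) auto
  then have r0: "0 < r0" "r0 \<le> R"
    using s k zero_le_dist[of x y] unfolding r0_def R_def by linarith+
  have "(cball x r1 - cball y r2) \<union> (cball y r2 - cball x r1) \<subseteq> ball x R - ball x r0"
    using dist_triangle[of x _ y] dist_triangle[of y _ x]
    by (auto simp: R_def r0_def s(1) dist_commute) (smt (verit))+
  then have "measure M ((cball x r1 - cball y r2) \<union> (cball y r2 - cball x r1))
      \<le> measure M (ball x R - ball x r0)"
    by (intro measure_mono_bounded) (auto simp: sets_M)
  also have "\<dots> \<le> D * ((R - r0) / R) powr \<delta> * measure M (ball x R)"
    by (rule measure_annulus_le[OF r0])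
  also have "\<dots> \<le> D * (3 * (s / k) powr \<delta>) * (2 * measure M (cball x r1))"
  proof (intro mult_mono)
    have "0 \<le> s"
      using s(1) by simp
    moreover have "R - r0 = 3 * s"
      by (simp add: R_def r0_def)
    ultimately have "(R - r0) / R \<le> 3 * s / k"
      using k by (simp only:) (intro divide_left_mono, auto simp: R_def)
    then have "(R - r0) / R \<le> 3 * (s / k)"
      by simp
    then have "((R - r0) / R) powr \<delta> \<le> (3 * (s / k)) powr \<delta>"
      using r0 \<delta>_pos by (intro powr_mono2) auto
    also have "\<dots> = 3 powr \<delta> * (s / k) powr \<delta>"
      using k s by (simp add: powr_mult[symmetric])
    also have "\<dots> \<le> 3 powr 1 * (s / k) powr \<delta>"
      using \<delta>_le_1 by (intro mult_right_mono powr_mono) auto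
    finally show "((R - r0) / R) powr \<delta> \<le> 3 * (s / k) powr \<delta>" by simp
    have "(1 - \<theta>) * R = r1 + 2 * s - \<theta> * r1 - 2 * (\<theta> * s)"
      unfolding R_def by (simp add: algebra_simps)
    moreover have "0 \<le> \<theta> * s"
      using s \<theta>_pos by simp
    ultimately have "(1 - \<theta>) * R \<le> r1"
      using s(2) by linarith
    then have "measure M (ball x ((1 - \<theta>) * R)) \<le> measure M (cball x r1)"
      by (intro measure_mono_bounded) (auto simp: sets_M)
    then show "measure M (ball x R) \<le> 2 * measure M (cball x r1)"
      using measure_ball_le_twice_shrunk[of R x] r0 by linarith
  qed (use D_ge_1 in auto)
  finally show ?thesis by (simp add: algebra_simps)
qed

lemma integrable_indicator_mult:
  fixes g :: "'a \<Rightarrow> real"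
  assumes g: "g \<in> borel_measurable M" "AE z in M. \<bar>g z\<bar> \<le> A"
    and S: "S \<in> sets M" "bounded S"
  shows "integrable M (\<lambda>z. indicator S z * g z)"
proof (rule Bochner_Integration.integrable_bound)
  show "integrable M (\<lambda>z. A * indicator S z)"
    using S emeasure_bounded_finite by auto
  show "(\<lambda>z. indicator S z * g z) \<in> borel_measurable M"
    using S g by measurable
qed (use g in \<open>auto elim!: eventually_mono simp: indicator_def\<close>)

lemma abs_integral_le_measure:
  fixes h :: "'a \<Rightarrow> real"
  assumes "integrable M h" "AE z in M. \<bar>h z\<bar> \<le> A * indicator S z"
    and "S \<in> sets M" "bounded S"
  shows "\<bar>integral\<^sup>L M h\<bar> \<le> A * measure M S"
proof -
  have "\<bar>integral\<^sup>L M h\<bar> \<le> (\<integral>z. \<bar>h z\<bar> \<partial>M)"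
    by simp
  also have "\<dots> \<le> (\<integral>z. A * indicator S z \<partial>M)"
    using assms emeasure_bounded_finite by (intro integral_mono_AE) auto
  also have "\<dots> = A * measure M S"
    using assms emeasure_bounded_finite by (simp add: space_M)
  finally show ?thesis .
qed

lemma abs_integral_indicator_mult_le:
  fixes g :: "'a \<Rightarrow> real"
  assumes g: "g \<in> borel_measurable M" "AE z in M. \<bar>g z\<bar> \<le> A"
    and S: "S \<in> sets M" "bounded S"
  shows "\<bar>\<integral>z. indicator S z * g z \<partial>M\<bar> \<le> A * measure M S"
  using g by (intro abs_integral_le_measure integrable_indicator_mult S)
    (auto elim!: eventually_mono simp: indicator_def)

lemma abs_integral_indicator_mult_diff_le:
  fixes g :: "'a \<Rightarrow> real"
  assumes g: "g \<in> borel_measurable M" "AE z in M. \<bar>g z\<bar> \<le> A"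
    and S: "S \<in> sets M" "bounded S" and T: "T \<in> sets M" "bounded T"
  shows "\<bar>(\<integral>z. indicator S z * g z \<partial>M) - (\<integral>z. indicator T z * g z \<partial>M)\<bar>
     \<le> A * measure M ((S - T) \<union> (T - S))"
proof -
  have iS: "integrable M (\<lambda>z. indicator S z * g z)"
    and iT: "integrable M (\<lambda>z. indicator T z * g z)"
    using integrable_indicator_mult[OF g] S T by auto
  have "(\<integral>z. indicator S z * g z \<partial>M) - (\<integral>z. indicator T z * g z \<partial>M)
      = (\<integral>z. indicator S z * g z - indicator T z * g z \<partial>M)"
    using iS iT by simp
  also have "\<bar>\<dots>\<bar> \<le> A * measure M ((S - T) \<union> (T - S))"
    using g S T iS iT
    by (intro abs_integral_le_measure) (auto elim!: eventually_mono simp: indicator_def)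
  finally show ?thesis .
qed

definition ball_average :: "('a \<Rightarrow> real) \<Rightarrow> 'a \<Rightarrow> real \<Rightarrow> real" where
  "ball_average g x r = (\<integral>z. indicator (cball x r) z * g z \<partial>M) / measure M (cball x r)"

lemma abs_ball_average_le:
  assumes "g \<in> borel_measurable M" "AE z in M. \<bar>g z\<bar> \<le> A" "0 < r"
  shows "\<bar>ball_average g x r\<bar> \<le> A"
proof -
  have "\<bar>\<integral>z. indicator (cball x r) z * g z \<partial>M\<bar> \<le> A * measure M (cball x r)"
    using assms by (intro abs_integral_indicator_mult_le) auto
  then show ?thesis
    using measure_cball_pos[OF \<open>0 < r\<close>, of x]
    by (simp add: ball_average_def abs_divide divide_le_eq)
qed

lemma ball_average_diff_close_le:
  assumes g: "g \<in> borel_measurable M" "AE z in M. \<bar>g z\<bar> \<le> A" "0 \<le> A"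
    and k: "0 < k" "k \<le> r1" "k \<le> r2"
    and s: "s = dist x y + \<bar>r1 - r2\<bar>" "2 * s \<le> \<theta> * r1"
  shows "\<bar>ball_average g x r1 - ball_average g y r2\<bar> \<le> 12 * D * A * (s / k) powr \<delta>"
proof -
  define a where "a = measure M (cball x r1)"
  define b where "b = measure M (cball y r2)"
  define \<Delta> where "\<Delta> = (cball x r1 - cball y r2) \<union> (cball y r2 - cball x r1)"
  have a: "0 < a" and b: "0 < b"
    unfolding a_def b_def using k by (auto intro: measure_cball_pos)
  have "\<bar>(\<integral>z. indicator (cball y r2) z * g z \<partial>M)\<bar> \<le> A * b"
    unfolding b_def using g by (intro abs_integral_indicator_mult_le) auto
  moreover have "\<bar>(\<integral>z. indicator (cball x r1) z * g z \<partial>M) - (\<integral>z. indicator (cball y r2) z * g z \<partial>M)\<bar>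
      \<le> A * measure M \<Delta>"
    unfolding \<Delta>_def using g by (intro abs_integral_indicator_mult_diff_le) auto
  moreover have "\<bar>b - a\<bar> \<le> measure M \<Delta>"
    using abs_integral_indicator_mult_diff_le[of "\<lambda>_. 1" 1 "cball x r1" "cball y r2"]
      emeasure_bounded_finite[of "cball x r1"] emeasure_bounded_finite[of "cball y r2"]
    unfolding \<Delta>_def a_def b_def by (simp add: space_M abs_minus_commute)
  ultimately have "\<bar>ball_average g x r1 - ball_average g y r2\<bar> \<le> 2 * A * measure M \<Delta> / a"
    unfolding ball_average_def a_def[symmetric] b_def[symmetric]
    using a b g(3) by (intro abs_diff_divide_le)
  also have "\<dots> \<le> 2 * A * (6 * D * (s / k) powr \<delta> * a) / a"
    unfolding \<Delta>_def a_def using a g(3) measure_symdiff_cballs_le[OF k s]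
    by (intro divide_right_mono mult_left_mono) (auto simp: a_def)
  also have "\<dots> = 12 * D * A * (s / k) powr \<delta>"
    using a by simp
  finally show ?thesis .
qed

definition holder_const :: real where "holder_const = max (12 * D) (4 / \<theta>)"

lemma holder_const_pos: "0 < holder_const"
  using D_ge_1 by (auto simp: holder_const_def)

lemma ball_average_diff_le:
  assumes g: "g \<in> borel_measurable M" "AE z in M. \<bar>g z\<bar> \<le> A" "0 \<le> A"
    and k: "0 < k" "k \<le> r1" "k \<le> r2"
  shows "\<bar>ball_average g x r1 - ball_average g y r2\<bar>
     \<le> holder_const * A * ((dist x y + \<bar>r1 - r2\<bar>) / k) powr \<delta>"
proof -
  define s where "s = dist x y + \<bar>r1 - r2\<bar>"
  have "\<bar>ball_average g x r1 - ball_average g y r2\<bar> \<le> holder_const * A * (s / k) powr \<delta>"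
  proof (cases "2 * s \<le> \<theta> * r1")
    case True
    then have "\<bar>ball_average g x r1 - ball_average g y r2\<bar> \<le> 12 * D * A * (s / k) powr \<delta>"
      using ball_average_diff_close_le[OF g k s_def] by blast
    also have "\<dots> \<le> holder_const * A * (s / k) powr \<delta>"
      using g(3) by (intro mult_right_mono) (auto simp: holder_const_def)
    finally show ?thesis .
  next
    case False
    \<comment> \<open>far apart balls: the trivial bound \<open>2A\<close> already suffices, as \<open>s/k > \<theta>/2\<close>\<close>
    have "\<theta> * k \<le> \<theta> * r1"
      using \<theta>_pos k by (intro mult_left_mono) auto
    then have "\<theta> / 2 \<le> s / k"
      using False k by (simp add: field_simps)
    then have "(\<theta> / 2) powr 1 \<le> (s / k) powr \<delta>"
      using \<theta>_pos \<theta>_le_half \<delta>_pos \<delta>_le_1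
      by (intro order_trans[OF powr_mono' powr_mono2]) auto
    then have "\<theta> / 2 \<le> (s / k) powr \<delta>"
      by simp
    have "2 * A = (4 / \<theta>) * A * (\<theta> / 2)"
      using \<theta>_pos by simp
    also have "\<dots> \<le> holder_const * A * (s / k) powr \<delta>"
      using \<theta>_pos D_ge_1 g(3) \<open>\<theta> / 2 \<le> (s / k) powr \<delta>\<close>
      by (intro mult_mono) (auto simp: holder_const_def)
    finally have "2 * A \<le> holder_const * A * (s / k) powr \<delta>" .
    moreover have "\<bar>ball_average g x r1\<bar> \<le> A" "\<bar>ball_average g y r2\<bar> \<le> A"
      using g k by (auto intro: abs_ball_average_le)
    ultimately show ?thesis by linarith
  qed
  then show ?thesis by (simp add: s_def)
qed

end

locale averaging_domain = annular_decay_space M \<delta> D for M :: "'a::metric_space measure" and \<delta> D +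
  fixes \<Omega> :: "'a set" and \<rho> :: "'a \<Rightarrow> real"
  assumes open_\<Omega>: "open \<Omega>"
    and continuous_\<rho>: "continuous_on \<Omega> \<rho>"
    and \<rho>_pos: "\<And>x. x \<in> \<Omega> \<Longrightarrow> 0 < \<rho> x"
begin

definition zero_ext :: "('a \<Rightarrow> real) \<Rightarrow> 'a \<Rightarrow> real" where
  "zero_ext v z = indicator \<Omega> z * v z"

definition ess_bounded_by :: "real \<Rightarrow> ('a \<Rightarrow> real) \<Rightarrow> bool" where
  "ess_bounded_by A v \<longleftrightarrow> 0 \<le> A \<and> zero_ext v \<in> borel_measurable M \<and> (AE z in M. \<bar>zero_ext v z\<bar> \<le> A)"

lemma avg_op_eq_ball_average: "avg_op M \<Omega> \<rho> v x = ball_average (zero_ext v) x (\<rho> x)"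
  unfolding avg_op_def ball_average_def set_lebesgue_integral_def zero_ext_def
  by (simp add: indicator_inter_arith mult.assoc)

lemma avg_op_diff_le:
  assumes "ess_bounded_by A v" "0 < k" "k \<le> \<rho> x" "k \<le> \<rho> y"
  shows "\<bar>avg_op M \<Omega> \<rho> v x - avg_op M \<Omega> \<rho> v y\<bar>
    \<le> holder_const * A * ((dist x y + \<bar>\<rho> x - \<rho> y\<bar>) / k) powr \<delta>"
  unfolding avg_op_eq_ball_average
  using assms by (intro ball_average_diff_le) (auto simp: ess_bounded_by_def)

lemma continuous_on_avg_op:
  assumes "ess_bounded_by A v"
  shows "continuous_on \<Omega> (avg_op M \<Omega> \<rho> v)"
  unfolding continuous_on_eq_continuous_at[OF open_\<Omega>]
proof
  fix x assume x: "x \<in> \<Omega>"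
  let ?f = "avg_op M \<Omega> \<rho> v"
  let ?g = "\<lambda>y. holder_const * A * ((dist x y + \<bar>\<rho> x - \<rho> y\<bar>) / (\<rho> x / 2)) powr \<delta>"
  have \<rho>x: "0 < \<rho> x"
    using \<rho>_pos x by auto
  have \<rho>_lim: "(\<rho> \<longlongrightarrow> \<rho> x) (at x)"
    using continuous_\<rho> x open_\<Omega> continuous_on_eq_continuous_at isCont_def by blast
  have "eventually (\<lambda>y. \<rho> x / 2 < \<rho> y) (at x)"
    using order_tendstoD(1)[OF \<rho>_lim, of "\<rho> x / 2"] \<rho>x by simp
  then have "eventually (\<lambda>y. norm (?f y - ?f x) \<le> ?g y) (at x)"
    by eventually_elim
      (use \<rho>x avg_op_diff_le[OF assms, of "\<rho> x / 2" x] in \<open>auto simp: abs_minus_commute\<close>)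
  moreover have "((\<lambda>y. dist x y + \<bar>\<rho> x - \<rho> y\<bar>) \<longlongrightarrow> dist x x + \<bar>\<rho> x - \<rho> x\<bar>) (at x)"
    by (intro tendsto_intros \<rho>_lim)
  then have "((\<lambda>y. (dist x y + \<bar>\<rho> x - \<rho> y\<bar>) / (\<rho> x / 2)) \<longlongrightarrow> 0) (at x)"
    using tendsto_divide[OF _ tendsto_const, of "\<lambda>y. dist x y + \<bar>\<rho> x - \<rho> y\<bar>" 0 _ "\<rho> x / 2"] \<rho>x
    by simp
  then have "(?g \<longlongrightarrow> 0) (at x)"
    using \<delta>_pos \<rho>x by (intro tendsto_mult_right_zero tendsto_zero_powrI[OF _ tendsto_const]) auto
  ultimately have "((\<lambda>y. ?f y - ?f x) \<longlongrightarrow> 0) (at x)"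
    by (rule Lim_null_comparison)
  then show "isCont ?f x"
    by (simp add: isCont_def LIM_zero_iff)
qed

lemma ess_bounded_by_avg_op:
  assumes "ess_bounded_by A v"
  shows "ess_bounded_by A (avg_op M \<Omega> \<rho> v)"
proof -
  have "(\<lambda>z. indicator \<Omega> z *\<^sub>R avg_op M \<Omega> \<rho> v z) \<in> borel_measurable borel"
    using open_\<Omega> continuous_on_avg_op[OF assms] by (intro borel_measurable_continuous_on_indicator) auto
  moreover have "zero_ext (avg_op M \<Omega> \<rho> v) = (\<lambda>z. indicator \<Omega> z *\<^sub>R avg_op M \<Omega> \<rho> v z)"
    by (simp add: zero_ext_def fun_eq_iff)
  ultimately have "zero_ext (avg_op M \<Omega> \<rho> v) \<in> borel_measurable M"
    using measurable_cong_sets[OF sets_M refl, where N = "borel :: real measure"] by simp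
  moreover have "\<bar>zero_ext (avg_op M \<Omega> \<rho> v) z\<bar> \<le> A" for z
    using assms \<rho>_pos[of z] abs_ball_average_le[of "zero_ext v" A "\<rho> z" z]
    by (cases "z \<in> \<Omega>") (auto simp: zero_ext_def ess_bounded_by_def avg_op_eq_ball_average)
  ultimately show ?thesis
    using assms by (simp add: ess_bounded_by_def)
qed

lemma avg_op_iterate_diff_le:
  assumes "ess_bounded_by A u" "1 \<le> n" "0 < k" "k \<le> \<rho> x" "k \<le> \<rho> y"
  shows "\<bar>(avg_op M \<Omega> \<rho> ^^ n) u x - (avg_op M \<Omega> \<rho> ^^ n) u y\<bar>
    \<le> holder_const * A * ((dist x y + \<bar>\<rho> x - \<rho> y\<bar>) / k) powr \<delta>"
proof -
  obtain m where n: "n = Suc m"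
    using assms(2) by (cases n) auto
  have "ess_bounded_by A ((avg_op M \<Omega> \<rho> ^^ m) u)"
    by (induction m) (auto simp: assms(1) ess_bounded_by_avg_op)
  then show ?thesis
    unfolding n funpow.simps comp_def using assms by (intro avg_op_diff_le)
qed

lemma not_AE_outside:
  assumes "\<Omega> \<noteq> {}" shows "\<not> (AE z in M. z \<notin> \<Omega>)"
proof
  assume "AE z in M. z \<notin> \<Omega>"
  then have null: "emeasure M \<Omega> = 0"
    using AE_iff_measurable[of \<Omega> M "\<lambda>z. z \<notin> \<Omega>"] open_\<Omega> by (simp add: space_M)
  obtain x r where "0 < r" "ball x r \<subseteq> \<Omega>"
    using assms open_\<Omega> open_contains_ball by blast
  have "0 < emeasure M (ball x r)"
    using mm_space \<open>0 < r\<close> by (simp add: mm_space_def)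
  also have "\<dots> \<le> emeasure M \<Omega>"
    using \<open>ball x r \<subseteq> \<Omega>\<close> open_\<Omega> by (intro emeasure_mono) (auto simp: sets_M)
  finally show False
    using null by simp
qed

lemma ess_bounded_by_Linf_norm:
  assumes u: "u \<in> borel_measurable M" "Linf_norm M \<Omega> u < \<infinity>" and "\<Omega> \<noteq> {}"
  shows "ess_bounded_by (real_of_ereal (Linf_norm M \<Omega> u)) u"
proof -
  define L where "L = Linf_norm M \<Omega> u"
  have "AE z in restrict_space M \<Omega>. ereal \<bar>u z\<bar> \<le> L"
    unfolding L_def Linf_norm_def by (rule esssup_AE)
  then have ae: "AE z in M. z \<in> \<Omega> \<longrightarrow> ereal \<bar>u z\<bar> \<le> L"
    using open_\<Omega> by (subst (asm) AE_restrict_space_iff) (auto simp: space_M)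
  have "\<not> (AE z in M. z \<notin> \<Omega>)"
    using not_AE_outside[OF \<open>\<Omega> \<noteq> {}\<close>] .
  moreover have "AE z in M. z \<notin> \<Omega>" if "L < 0"
    using ae
  proof eventually_elim
    case (elim z)
    have "ereal 0 \<le> ereal \<bar>u z\<bar>"
      by simp
    then show ?case
      using elim that by (metis order.trans not_le zero_ereal_def)
  qed
  ultimately have "\<not> L < 0"
    by blast
  moreover have "L \<noteq> \<infinity>"
    using u by (simp add: L_def)
  ultimately obtain r where r: "L = ereal r" "0 \<le> r"
    by (cases L) auto
  have "zero_ext u \<in> borel_measurable M"
    unfolding zero_ext_def using u open_\<Omega> by measurable
  moreover have "AE z in M. \<bar>zero_ext u z\<bar> \<le> r"
    using ae r by (auto elim!: eventually_mono simp: zero_ext_def indicator_def)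
  ultimately show ?thesis
    using r by (simp add: ess_bounded_by_def L_def)
qed

lemma Inf_radius_pos:
  assumes "compact K" "K \<subseteq> \<Omega>" "K \<noteq> {}"
  shows "0 < (INF z\<in>K. \<rho> z)" "z \<in> K \<Longrightarrow> (INF z\<in>K. \<rho> z) \<le> \<rho> z"
proof -
  obtain z0 where z0: "z0 \<in> K" "\<forall>y\<in>K. \<rho> z0 \<le> \<rho> y"
    using continuous_attains_inf[OF assms(1,3) continuous_on_subset[OF continuous_\<rho> assms(2)]]
    by blast
  then have "(INF z\<in>K. \<rho> z) = \<rho> z0"
    by (intro cInf_eq_minimum) auto
  then show "0 < (INF z\<in>K. \<rho> z)" "z \<in> K \<Longrightarrow> (INF z\<in>K. \<rho> z) \<le> \<rho> z"
    using z0 \<rho>_pos assms(2) by auto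
qed

lemma avg_op_iterate_holder_omega_hat:
  assumes \<omega>: "modulus_of_continuity (diameter \<Omega>) \<omega>" "concave_on {0..diameter \<Omega>} \<omega>"
      "\<omega> (diameter \<Omega>) \<le> diameter \<Omega>"
    and \<rho>_\<omega>: "\<forall>x\<in>\<Omega>. \<forall>y\<in>\<Omega>. \<bar>\<rho> x - \<rho> y\<bar> \<le> \<omega> (dist x y)"
    and "bounded \<Omega>" and u: "u \<in> borel_measurable M" "Linf_norm M \<Omega> u < \<infinity>"
    and K: "compact K" "K \<subseteq> \<Omega>" "x \<in> K" "y \<in> K" and "1 \<le> n"
  shows "\<bar>(avg_op M \<Omega> \<rho> ^^ n) u x - (avg_op M \<Omega> \<rho> ^^ n) u y\<bar>
    \<le> real_of_ereal (Linf_norm M \<Omega> u) *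
       (2 * holder_const * (INF z\<in>K. \<rho> z) powr (-\<delta>) * omega_hat (diameter \<Omega>) \<omega> (dist x y) powr \<delta>)"
proof -
  define A where "A = real_of_ereal (Linf_norm M \<Omega> u)"
  define k where "k = (INF z\<in>K. \<rho> z)"
  define w where "w = omega_hat (diameter \<Omega>) \<omega> (dist x y)"
  have A: "ess_bounded_by A u"
    unfolding A_def using K by (intro ess_bounded_by_Linf_norm u) auto
  have k: "0 < k" "k \<le> \<rho> x" "k \<le> \<rho> y"
    unfolding k_def using Inf_radius_pos K by auto
  have "dist x y \<le> diameter \<Omega>"
    using K \<open>bounded \<Omega>\<close> by (intro diameter_bounded_bound) auto
  then have "dist x y \<le> w" "\<omega> (dist x y) \<le> w"
    unfolding w_def using omega_hat_ge[OF \<omega>] by auto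
  moreover have "\<bar>\<rho> x - \<rho> y\<bar> \<le> \<omega> (dist x y)"
    using \<rho>_\<omega> K by auto
  ultimately have "((dist x y + \<bar>\<rho> x - \<rho> y\<bar>) / k) powr \<delta> \<le> 2 * (k powr (-\<delta>) * w powr \<delta>)"
    using k \<delta>_pos \<delta>_le_1 by (intro powr_div_le_of_le_double) auto
  moreover have "0 \<le> holder_const * A"
    using A holder_const_pos by (simp add: ess_bounded_by_def)
  ultimately have "holder_const * A * ((dist x y + \<bar>\<rho> x - \<rho> y\<bar>) / k) powr \<delta>
      \<le> holder_const * A * (2 * (k powr (-\<delta>) * w powr \<delta>))"
    by (rule mult_left_mono)
  also have "\<dots> = A * (2 * holder_const * k powr (-\<delta>) * w powr \<delta>)"
    by (simp add: mult_ac)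
  finally show ?thesis
    using avg_op_iterate_diff_le[OF A \<open>1 \<le> n\<close> k] by (simp add: A_def k_def w_def)
qed

lemma avg_op_iterate_uniformly_equicontinuous:
  assumes u: "u \<in> borel_measurable M" "Linf_norm M \<Omega> u < \<infinity>"
    and K: "compact K" "K \<subseteq> \<Omega>" and "0 < \<epsilon>"
  shows "\<exists>\<eta>>0. \<forall>n\<ge>1. \<forall>x\<in>K. \<forall>y\<in>K. dist x y < \<eta> \<longrightarrow>
    \<bar>(avg_op M \<Omega> \<rho> ^^ n) u x - (avg_op M \<Omega> \<rho> ^^ n) u y\<bar> < \<epsilon>"
proof (cases "K = {}")
  case False
  define A where "A = real_of_ereal (Linf_norm M \<Omega> u)"
  define k where "k = (INF z\<in>K. \<rho> z)"
  define \<tau> where "\<tau> = k * (\<epsilon> / (holder_const * A + 1)) powr (1 / \<delta>)"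
  have "ess_bounded_by A u"
    unfolding A_def using K False by (intro ess_bounded_by_Linf_norm u) auto
  then have A: "ess_bounded_by A u" "0 \<le> holder_const * A"
    using holder_const_pos by (auto simp: ess_bounded_by_def)
  have k: "0 < k" "\<And>z. z \<in> K \<Longrightarrow> k \<le> \<rho> z"
    unfolding k_def using Inf_radius_pos K False by auto
  have "0 < \<tau>"
    unfolding \<tau>_def using k A \<open>0 < \<epsilon>\<close> by (simp add: add_nonneg_pos)
  moreover have "uniformly_continuous_on K \<rho>"
    using compact_uniformly_continuous continuous_on_subset[OF continuous_\<rho>] K by blast
  ultimately obtain d where d: "0 < d" "\<forall>x\<in>K. \<forall>y\<in>K. dist y x < d \<longrightarrow> dist (\<rho> y) (\<rho> x) < \<tau> / 2"
    unfolding uniformly_continuous_on_def by (meson half_gt_zero)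
  show ?thesis
  proof (intro exI[of _ "min (\<tau> / 2) d"] conjI allI impI ballI)
    show "0 < min (\<tau> / 2) d"
      using \<open>0 < \<tau>\<close> d by simp
    fix n :: nat and x y
    assume n: "1 \<le> n" and xy: "x \<in> K" "y \<in> K" "dist x y < min (\<tau> / 2) d"
    then have "dist (\<rho> x) (\<rho> y) < \<tau> / 2"
      using d(2) by simp
    then have "dist x y + \<bar>\<rho> x - \<rho> y\<bar> < \<tau>"
      using xy(3) by (simp add: dist_real_def)
    then have "holder_const * A * ((dist x y + \<bar>\<rho> x - \<rho> y\<bar>) / k) powr \<delta> < \<epsilon>"
      using k A \<open>0 < \<epsilon>\<close> \<delta>_pos by (intro mult_powr_div_less) (auto simp: \<tau>_def)
    then show "\<bar>(avg_op M \<Omega> \<rho> ^^ n) u x - (avg_op M \<Omega> \<rho> ^^ n) u y\<bar> < \<epsilon>"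
      using avg_op_iterate_diff_le[OF A(1) n k(1) k(2)[OF xy(1)] k(2)[OF xy(2)]] by linarith
  qed
qed (auto intro: exI[of _ 1])

end

lemma (in annular_decay_space) averaging_domain_if_admissible:
  assumes "bounded_domain \<Omega>" "admissible_radius \<Omega> \<rho>"
  shows "averaging_domain M \<delta> D \<Omega> \<rho>"
proof unfold_locales
  show "open \<Omega>"
    using assms(1) by (simp add: bounded_domain_def)
  show "continuous_on \<Omega> \<rho>"
    using assms(2) continuous_on_subset[OF _ closure_subset] by (auto simp: admissible_radius_def)
  show "\<And>x. x \<in> \<Omega> \<Longrightarrow> 0 < \<rho> x"
    using assms(2) by (simp add: admissible_radius_def)
qed

theorem theorem3p9:
  fixes M :: "'a::metric_space measure" and \<delta> D :: real
  assumes "proper_space TYPE('a)"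
    and "mm_space M"
    and "0 < \<delta>" and "\<delta> \<le> 1"
    and "annular_decay M \<delta> D"
  shows "\<exists>C>0. \<forall>(\<Omega>::'a set) \<rho> \<omega>.
     bounded_domain \<Omega> \<and> admissible_radius \<Omega> \<rho> \<and>
     modulus_of_continuity (diameter \<Omega>) \<omega> \<and> concave_on {0..diameter \<Omega>} \<omega> \<and>
     \<omega> (diameter \<Omega>) \<le> diameter \<Omega> \<and>
     (\<forall>x\<in>\<Omega>. \<forall>y\<in>\<Omega>. \<bar>\<rho> x - \<rho> y\<bar> \<le> \<omega> (dist x y))
     \<longrightarrow>
     (\<forall>u K x y n. u \<in> borel_measurable M \<and> Linf_norm M \<Omega> u < \<infinity> \<and>
        compact K \<and> K \<subseteq> \<Omega> \<and> x \<in> K \<and> y \<in> K \<and> n \<ge> 1 \<longrightarrow>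
        \<bar>((avg_op M \<Omega> \<rho>) ^^ n) u x - ((avg_op M \<Omega> \<rho>) ^^ n) u y\<bar>
          \<le> real_of_ereal (Linf_norm M \<Omega> u) *
             (C * (INF z\<in>K. \<rho> z) powr (-\<delta>) * (omega_hat (diameter \<Omega>) \<omega> (dist x y)) powr \<delta>))
     \<and>
     (\<forall>u K. u \<in> borel_measurable M \<and> Linf_norm M \<Omega> u < \<infinity> \<and> compact K \<and> K \<subseteq> \<Omega> \<longrightarrow>
        (\<forall>\<epsilon>>0. \<exists>\<eta>>0. \<forall>n\<ge>1. \<forall>x\<in>K. \<forall>y\<in>K. dist x y < \<eta> \<longrightarrow>
           \<bar>((avg_op M \<Omega> \<rho>) ^^ n) u x - ((avg_op M \<Omega> \<rho>) ^^ n) u y\<bar> < \<epsilon>))"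
proof -
  interpret annular_decay_space M \<delta> D
    using assms(2-5) by unfold_locales
  show ?thesis
    apply (rule exI[of _ "2 * holder_const"], intro conjI allI impI)
    subgoal
      using holder_const_pos by simp
    subgoal
      by (elim conjE, rule averaging_domain.avg_op_iterate_holder_omega_hat[OF averaging_domain_if_admissible])
        (auto simp: bounded_domain_def)
    subgoal
      by (elim conjE, rule averaging_domain.avg_op_iterate_uniformly_equicontinuous[OF averaging_domain_if_admissible])
        (auto simp: bounded_domain_def)
    done
qed

end
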